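(* The outage probability of the IRS-OMA user $d$ with 1-bit coding is $$P_d=\left[1-\frac{2}{\Gamma(Q)}\left(\frac{\gamma_{th_d}}{\rho\Omega_{sr}\Omega_{rd}}\right)^{Q/2}K_Q\!\left(2\sqrt{\frac{\gamma_{th_d}}{\rho\Omega_{sr}\Omega_{rd}}}\right)\right]^{P}.$$
   Context: Fix integers $P,Q\ge1$, $K=PQ$, and $\Omega_{sr},\Omega_{rd}>0$. Let $X_{d,1},\dots,X_{d,P}$ be i.i.d., each distributed as $\left|\sum_{k=1}^{Q} g_k h_k\right|^2$ with $g_1,\dots,g_Q,h_1,\dots,h_Q$ independent, $g_k\sim\mathcal{CN}(0,\Omega_{sr})$, $h_k\sim\mathcal{CN}(0,\Omega_{rd})$ (the cascade gain of the $p$-th block of $Q$ IRS elements). The SNR of user $d$ is $\gamma_d=\rho\max_{p}X_{d,p}$ with transmit SNR $\rho>0$. With target rate $R_{oma}>0$ and $\gamma_{th_d}=2^{R_{oma}}-1$, the outage probability is $P_d=\Pr(\gamma_d\le\gamma_{th_d})$. $K_\nu$ denotes the modified Bessel function of the second kind, $\Gamma$ the gamma function. *)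

theory Defs
  imports "HOL-Probability.Probability"
begin

definition besselK :: "real \<Rightarrow> real \<Rightarrow> real" where
  "besselK \<nu> z = (LBINT t:{0..}. exp (- z * cosh t) * cosh (\<nu> * t))"

text \<open>Density (w.r.t. Lebesgue measure on the complex plane) of the circularly
  symmetric complex Gaussian CN(0, Omega).\<close>
definition cn_density :: "real \<Rightarrow> complex \<Rightarrow> real" where
  "cn_density w z = exp (- ((cmod z) ^ 2) / w) / (pi * w)"

end

theory Submission
  imports Defs
begin

text \<open>Conditionally on the gains \<open>h\<^sub>k\<close>, the cascade sum \<open>\<Sum>\<^sub>k g\<^sub>k h\<^sub>k\<close> of independent circularly
  symmetric Gaussians is again \<open>CN(0, \<Omega>\<^sub>s\<^sub>r T)\<close> with \<open>T = \<Sum>\<^sub>k |h\<^sub>k|\<^sup>2\<close>, so its squared modulus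
  exceeds \<open>x\<close> with probability \<open>exp (- x / (\<Omega>\<^sub>s\<^sub>r T))\<close>. The \<open>|h\<^sub>k|\<^sup>2\<close> are i.i.d. exponential,
  hence \<open>T\<close> is Erlang distributed, and averaging \<open>exp (- c / T)\<close> against the Erlang density
  becomes, after the substitution \<open>T = sqrt (c / l) e\<^sup>s\<close>, the integral representation of
  \<open>K\<^sub>Q\<close>. The \<open>P\<close> blocks are independent, so the distribution function of the maximum is the
  \<open>P\<close>-th power of that of one block.\<close>

section \<open>Lebesgue measure on the complex plane\<close>

lemma measurable_Complex [measurable (raw)]:
  "f \<in> borel_measurable M \<Longrightarrow> g \<in> borel_measurable M \<Longrightarrow>
    (\<lambda>x. Complex (f x) (g x)) \<in> borel_measurable M"
  by (simp add: borel_measurable_complex_iff)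

lemma distr_pair_lborel_Complex:
  "distr (lborel \<Otimes>\<^sub>M lborel) borel (\<lambda>(x, y). Complex x y) = (lborel :: complex measure)"
proof (rule lborel_eqI[symmetric])
  fix l u :: complex
  assume lu: "\<And>b. b \<in> Basis \<Longrightarrow> l \<bullet> b \<le> u \<bullet> b"
  have "Re l \<le> Re u" "Im l \<le> Im u"
    using lu[of 1] lu[of \<i>] by (auto simp: Basis_complex_def inner_complex_def)
  moreover have "(\<lambda>(x, y). Complex x y) -` box l u \<inter> space (lborel \<Otimes>\<^sub>M lborel)
      = {Re l<..<Re u} \<times> {Im l<..<Im u}"
    by (auto simp: box_def Basis_complex_def inner_complex_def space_pair_measure)
  ultimately show "emeasure (distr (lborel \<Otimes>\<^sub>M lborel) borel (\<lambda>(x, y). Complex x y)) (box l u)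
      = (\<Prod>b\<in>Basis. (u - l) \<bullet> b)"
    by (simp add: emeasure_distr lborel.emeasure_pair_measure_Times Basis_complex_def
        inner_complex_def ennreal_mult)
qed simp

lemma nn_integral_lborel_complex:
  fixes f :: "complex \<Rightarrow> ennreal"
  assumes [measurable]: "f \<in> borel_measurable borel"
  shows "(\<integral>\<^sup>+z. f z \<partial>lborel) = (\<integral>\<^sup>+x. \<integral>\<^sup>+y. f (Complex x y) \<partial>lborel \<partial>lborel)"
proof -
  have "(\<integral>\<^sup>+z. f z \<partial>lborel) = (\<integral>\<^sup>+p. f (case p of (x, y) \<Rightarrow> Complex x y) \<partial>(lborel \<Otimes>\<^sub>M lborel))"
    by (subst distr_pair_lborel_Complex[symmetric]) (simp add: nn_integral_distr)
  also have "\<dots> = (\<integral>\<^sup>+x. \<integral>\<^sup>+y. f (Complex x y) \<partial>lborel \<partial>lborel)"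
    by (subst lborel.nn_integral_fst[symmetric]) auto
  finally show ?thesis .
qed

lemma nn_integral_lborel_complex_Re_Im:
  fixes f g :: "real \<Rightarrow> ennreal"
  assumes [measurable]: "f \<in> borel_measurable borel" "g \<in> borel_measurable borel"
  shows "(\<integral>\<^sup>+z. f (Re z) * g (Im z) \<partial>lborel) = (\<integral>\<^sup>+x. f x \<partial>lborel) * (\<integral>\<^sup>+y. g y \<partial>lborel)"
  by (simp add: nn_integral_lborel_complex nn_integral_cmult nn_integral_multc)

lemma nn_integral_lborel_swap:
  fixes f :: "real \<Rightarrow> real \<Rightarrow> ennreal"
  assumes "case_prod f \<in> borel_measurable (lborel \<Otimes>\<^sub>M lborel)"
  shows "(\<integral>\<^sup>+x. \<integral>\<^sup>+y. f x y \<partial>lborel \<partial>lborel) = (\<integral>\<^sup>+y. \<integral>\<^sup>+x. f x y \<partial>lborel \<partial>lborel)"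
  using lborel_pair.Fubini'[OF assms] by simp

text \<open>Multiplication by \<open>c = \<beta> + \<i>\<delta>\<close> with \<open>\<beta> \<noteq> 0\<close> is the composition of two shears, each of
  which is handled by a one-dimensional affine substitution.\<close>
lemma nn_integral_lborel_complex_mult_Re:
  fixes f :: "complex \<Rightarrow> ennreal"
  assumes f[measurable]: "f \<in> borel_measurable borel" and c: "Re c \<noteq> 0"
  shows "(\<integral>\<^sup>+z. f z \<partial>lborel) = ennreal ((cmod c)\<^sup>2) * (\<integral>\<^sup>+z. f (c * z) \<partial>lborel)"
proof -
  define \<beta> \<delta> where "\<beta> = Re c" and "\<delta> = Im c"
  define k where "k = (\<beta>\<^sup>2 + \<delta>\<^sup>2) / \<beta>"
  have k: "k \<noteq> 0" and \<beta>: "\<beta> \<noteq> 0"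
    using c by (auto simp: k_def \<beta>_def)
  let ?g = "\<lambda>x y. f (Complex (\<beta> * x - \<delta> * y) (\<delta> * x + \<beta> * y))"
  have shear: "(\<integral>\<^sup>+u. f (Complex u (\<delta> * u / \<beta> + k * y)) \<partial>lborel) = ennreal \<bar>\<beta>\<bar> * (\<integral>\<^sup>+x. ?g x y \<partial>lborel)"
    for y
  proof -
    have "Complex (- \<delta> * y + \<beta> * x) (\<delta> * (- \<delta> * y + \<beta> * x) / \<beta> + k * y)
        = Complex (\<beta> * x - \<delta> * y) (\<delta> * x + \<beta> * y)" for x
      using \<beta> by (simp add: k_def field_simps power2_eq_square)
    then show ?thesis
      using nn_integral_real_affine[OF _ \<beta>, of "\<lambda>u. f (Complex u (\<delta> * u / \<beta> + k * y))" "- \<delta> * y"]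
      by simp
  qed
  have "(\<integral>\<^sup>+z. f z \<partial>lborel) = (\<integral>\<^sup>+u. \<integral>\<^sup>+v. f (Complex u v) \<partial>lborel \<partial>lborel)"
    by (rule nn_integral_lborel_complex[OF f])
  also have "\<dots> = (\<integral>\<^sup>+u. ennreal \<bar>k\<bar> * \<integral>\<^sup>+y. f (Complex u (\<delta> * u / \<beta> + k * y)) \<partial>lborel \<partial>lborel)"
    by (intro nn_integral_cong nn_integral_real_affine[OF _ k]) simp
  also have "\<dots> = ennreal \<bar>k\<bar> * (\<integral>\<^sup>+u. \<integral>\<^sup>+y. f (Complex u (\<delta> * u / \<beta> + k * y)) \<partial>lborel \<partial>lborel)"
    by (rule nn_integral_cmult) measurable
  also have "(\<integral>\<^sup>+u. \<integral>\<^sup>+y. f (Complex u (\<delta> * u / \<beta> + k * y)) \<partial>lborel \<partial>lborel)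
      = (\<integral>\<^sup>+y. ennreal \<bar>\<beta>\<bar> * (\<integral>\<^sup>+x. ?g x y \<partial>lborel) \<partial>lborel)"
    by (subst nn_integral_lborel_swap) (simp_all add: shear)
  also have "\<dots> = ennreal \<bar>\<beta>\<bar> * (\<integral>\<^sup>+x. \<integral>\<^sup>+y. ?g x y \<partial>lborel \<partial>lborel)"
    by (subst nn_integral_lborel_swap[of ?g]) (simp_all add: nn_integral_cmult)
  also have "ennreal \<bar>k\<bar> * (ennreal \<bar>\<beta>\<bar> * X) = ennreal ((cmod c)\<^sup>2) * X" for X
  proof -
    have "\<bar>k\<bar> * \<bar>\<beta>\<bar> = (cmod c)\<^sup>2"
      using \<beta> by (simp add: k_def abs_div cmod_power2 \<beta>_def \<delta>_def)
    then show ?thesis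
      by (simp add: ennreal_mult'[symmetric] mult.assoc[symmetric])
  qed
  also have "(\<integral>\<^sup>+x. \<integral>\<^sup>+y. ?g x y \<partial>lborel \<partial>lborel) = (\<integral>\<^sup>+z. f (c * z) \<partial>lborel)"
  proof -
    have "c * Complex x y = Complex (\<beta> * x - \<delta> * y) (\<delta> * x + \<beta> * y)" for x y
      by (simp add: \<beta>_def \<delta>_def complex_eq_iff)
    then show ?thesis
      by (simp add: nn_integral_lborel_complex)
  qed
  finally show ?thesis .
qed

lemma nn_integral_lborel_complex_mult:
  fixes f :: "complex \<Rightarrow> ennreal"
  assumes f[measurable]: "f \<in> borel_measurable borel" and c: "c \<noteq> 0"
  shows "(\<integral>\<^sup>+z. f z \<partial>lborel) = ennreal ((cmod c)\<^sup>2) * (\<integral>\<^sup>+z. f (c * z) \<partial>lborel)"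
proof (cases "Re c = 0")
  case True
  \<comment> \<open>\<open>c = (c / (1 + \<i>)) * (1 + \<i>)\<close>, and both factors have nonzero real part.\<close>
  define c' where "c' = c / (1 + \<i>)"
  have Re: "Re c' \<noteq> 0" "Re (1 + \<i>) \<noteq> 0"
    using True c by (auto simp: c'_def Re_divide complex_eq_iff)
  have "1 + \<i> \<noteq> 0"
    by (simp add: complex_eq_iff)
  then have c_eq: "c' * (1 + \<i>) = c"
    by (simp add: c'_def)
  have "(\<integral>\<^sup>+z. f z \<partial>lborel)
      = ennreal ((cmod c')\<^sup>2) * (ennreal ((cmod (1 + \<i>))\<^sup>2) * (\<integral>\<^sup>+z. f (c' * ((1 + \<i>) * z)) \<partial>lborel))"
    using nn_integral_lborel_complex_mult_Re[OF f Re(1)]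
      nn_integral_lborel_complex_mult_Re[of "\<lambda>z. f (c' * z)", OF _ Re(2)] by simp
  also have "\<dots> = ennreal ((cmod c' * cmod (1 + \<i>))\<^sup>2) * (\<integral>\<^sup>+z. f ((c' * (1 + \<i>)) * z) \<partial>lborel)"
    by (simp add: power_mult_distrib ennreal_mult' mult.assoc)
  also have "\<dots> = ennreal ((cmod c)\<^sup>2) * (\<integral>\<^sup>+z. f (c * z) \<partial>lborel)"
    by (simp only: c_eq norm_mult[symmetric])
  finally show ?thesis .
qed (rule nn_integral_lborel_complex_mult_Re[OF f])

lemma nn_integral_lborel_translate:
  fixes f :: "'a::euclidean_space \<Rightarrow> ennreal"
  assumes [measurable]: "f \<in> borel_measurable borel"
  shows "(\<integral>\<^sup>+z. f (s + z) \<partial>lborel) = (\<integral>\<^sup>+z. f z \<partial>lborel)"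
  by (subst lborel_distr_plus[symmetric, of s]) (simp add: nn_integral_distr)

section \<open>The circularly symmetric complex Gaussian\<close>

definition cn_measure :: "real \<Rightarrow> complex measure" where
  "cn_measure v = density lborel (\<lambda>z. ennreal (cn_density v z))"

lemma space_cn_measure [simp]: "space (cn_measure v) = UNIV"
  and sets_cn_measure [simp, measurable_cong]: "sets (cn_measure v) = sets borel"
  by (simp_all add: cn_measure_def)

lemma cn_density_nonneg: "v > 0 \<Longrightarrow> cn_density v z \<ge> 0"
  by (simp add: cn_density_def)

lemma borel_measurable_cn_density [measurable]: "cn_density v \<in> borel_measurable borel"
  unfolding cn_density_def by measurable

lemma cn_density_eq_normal_density:
  assumes "v > 0"
  shows "cn_density v z = normal_density 0 (sqrt (v / 2)) (Re z) * normal_density 0 (sqrt (v / 2)) (Im z)"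
proof -
  have "sqrt (2 * pi * (sqrt (v / 2))\<^sup>2) = sqrt (pi * v)" "sqrt (pi * v) * sqrt (pi * v) = pi * v"
    using assms by simp_all
  then show ?thesis
    using assms by (simp add: cn_density_def normal_density_def cmod_power2 mult_exp_exp field_simps)
qed

lemma cn_density_mult:
  assumes "v > 0" "c \<noteq> 0"
  shows "(cmod c)\<^sup>2 * cn_density (v * (cmod c)\<^sup>2) (c * z) = cn_density v z"
  using assms by (simp add: cn_density_def norm_mult power_mult_distrib field_simps)

lemma nn_integral_cn_density:
  assumes "v > 0"
  shows "(\<integral>\<^sup>+z. ennreal (cn_density v z) \<partial>lborel) = 1"
proof -
  let ?n = "\<lambda>x. ennreal (normal_density 0 (sqrt (v / 2)) x)"
  have "(\<integral>\<^sup>+z. ennreal (cn_density v z) \<partial>lborel) = (\<integral>\<^sup>+z. ?n (Re z) * ?n (Im z) \<partial>lborel)"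
    using assms by (simp add: cn_density_eq_normal_density ennreal_mult)
  also have "\<dots> = (\<integral>\<^sup>+x. ?n x \<partial>lborel) * (\<integral>\<^sup>+y. ?n y \<partial>lborel)"
    by (rule nn_integral_lborel_complex_Re_Im) simp_all
  finally show ?thesis
    using assms by (simp add: nn_integral_eq_integral)
qed

lemma prob_space_cn_measure: "v > 0 \<Longrightarrow> prob_space (cn_measure v)"
  unfolding cn_measure_def by (rule prob_spaceI) (simp add: emeasure_density nn_integral_cn_density)

lemma cn_density_convolution:
  assumes "a > 0" "b > 0"
  shows "(\<integral>\<^sup>+w. ennreal (cn_density a (z - w) * cn_density b w) \<partial>lborel) = ennreal (cn_density (a + b) z)"
proof -
  let ?na = "normal_density 0 (sqrt (a / 2))" and ?nb = "normal_density 0 (sqrt (b / 2))"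
  have conv: "(\<integral>\<^sup>+y. ennreal (?na (x - y) * ?nb y) \<partial>lborel) = ennreal (normal_density 0 (sqrt ((a + b) / 2)) x)"
    for x
    using conv_normal_density_zero_mean[of "sqrt (a / 2)" "sqrt (b / 2)"] assms
    by (simp add: fun_eq_iff add_divide_distrib)
  have "(\<integral>\<^sup>+w. ennreal (cn_density a (z - w) * cn_density b w) \<partial>lborel)
      = (\<integral>\<^sup>+w. ennreal (?na (Re z - Re w) * ?nb (Re w)) * ennreal (?na (Im z - Im w) * ?nb (Im w)) \<partial>lborel)"
    using assms by (intro nn_integral_cong) (simp add: cn_density_eq_normal_density ennreal_mult[symmetric] ac_simps)
  also have "\<dots> = (\<integral>\<^sup>+x. ennreal (?na (Re z - x) * ?nb x) \<partial>lborel) * (\<integral>\<^sup>+y. ennreal (?na (Im z - y) * ?nb y) \<partial>lborel)"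
    by (rule nn_integral_lborel_complex_Re_Im) simp_all
  also have "\<dots> = ennreal (cn_density (a + b) z)"
    unfolding conv using assms by (simp add: cn_density_eq_normal_density ennreal_mult)
  finally show ?thesis .
qed

lemma nn_integral_cn_measure_mult:
  fixes F :: "complex \<Rightarrow> ennreal"
  assumes v: "v > 0" and c: "c \<noteq> 0" and F[measurable]: "F \<in> borel_measurable borel"
  shows "(\<integral>\<^sup>+z. F (z * c) \<partial>cn_measure v) = (\<integral>\<^sup>+w. ennreal (cn_density (v * (cmod c)\<^sup>2) w) * F w \<partial>lborel)"
proof -
  have "(\<integral>\<^sup>+w. ennreal (cn_density (v * (cmod c)\<^sup>2) w) * F w \<partial>lborel)
      = (\<integral>\<^sup>+z. ennreal ((cmod c)\<^sup>2) * (ennreal (cn_density (v * (cmod c)\<^sup>2) (c * z)) * F (c * z)) \<partial>lborel)"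
    by (subst nn_integral_lborel_complex_mult[OF _ c]) (simp_all add: nn_integral_cmult)
  also have "\<dots> = (\<integral>\<^sup>+z. ennreal (cn_density v z) * F (z * c) \<partial>lborel)"
    using cn_density_mult[OF v c]
    by (simp add: ennreal_mult'[symmetric] mult.assoc[symmetric] mult.commute[of _ c])
  also have "\<dots> = (\<integral>\<^sup>+z. F (z * c) \<partial>cn_measure v)"
    unfolding cn_measure_def by (simp add: nn_integral_density)
  finally show ?thesis ..
qed

lemma nn_integral_exp_tail:
  assumes v: "v > 0"
  shows "(\<integral>\<^sup>+t. ennreal (exp (- t / v) / v) * indicator {s..} t \<partial>lborel) = ennreal (exp (- s / v))"
proof -
  have "filterlim (\<lambda>t. (- 1 / v) * t) at_bot at_top"
    by (rule filterlim_tendsto_neg_mult_at_bot[OF tendsto_const _ filterlim_ident]) (use v in simp)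
  then have "((\<lambda>t. - exp (- t / v)) \<longlongrightarrow> 0) at_top"
    using tendsto_minus[OF filterlim_compose[OF exp_at_bot]] by fastforce
  then have "(\<integral>\<^sup>+t. ennreal (exp (- t / v) / v) * indicator {s..} t \<partial>lborel) = ennreal (0 - (- exp (- s / v)))"
    using v by (intro nn_integral_FTC_atLeast) (auto intro!: derivative_eq_intros simp: field_simps)
  then show ?thesis
    by simp
qed

lemma nn_integral_exp_min:
  assumes v: "v > 0" and x: "x \<ge> 0"
  shows "(\<integral>\<^sup>+t. ennreal (exp (- t / v) * min x t / v\<^sup>2) * indicator {0..} t \<partial>lborel) = ennreal (1 - exp (- x / v))"
proof -
  \<comment> \<open>On \<open>[0, x]\<close> the integrand is the Erlang density of shape 2 and rate \<open>1/v\<close>.\<close>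
  have "(\<integral>\<^sup>+t. ennreal (exp (- t / v) * min x t / v\<^sup>2) * indicator {0..} t \<partial>lborel)
      = (\<integral>\<^sup>+t. ennreal (erlang_density 1 (1 / v) t) * indicator {..x} t
           + ennreal (x / v) * (ennreal (exp (- t / v) / v) * indicator {x..} t) \<partial>lborel)"
    using AE_lborel_singleton[of x]
  proof (intro nn_integral_cong_AE, eventually_elim)
    case (elim t)
    then show ?case
      using v x by (cases "t < 0"; cases "t < x")
        (simp_all add: erlang_density_def field_simps power2_eq_square ennreal_mult[symmetric])
  qed
  also have "\<dots> = (\<integral>\<^sup>+t. ennreal (erlang_density 1 (1 / v) t) * indicator {..x} t \<partial>lborel)
      + ennreal (x / v) * (\<integral>\<^sup>+t. ennreal (exp (- t / v) / v) * indicator {x..} t \<partial>lborel)"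
    by (subst nn_integral_add) (auto simp: nn_integral_cmult)
  also have "\<dots> = ennreal (erlang_CDF 1 (1 / v) x) + ennreal (x / v) * ennreal (exp (- x / v))"
    using v by (subst nn_integral_exp_tail[OF v]) (simp add: nn_integral_erlang_density)
  also have "\<dots> = ennreal (1 - exp (- x / v))"
  proof -
    have "erlang_CDF 1 (1 / v) x = 1 - (exp (- x / v) + x / v * exp (- x / v))"
      using x v by (simp add: erlang_CDF_def)
    moreover have "0 \<le> erlang_CDF 1 (1 / v) x"
      using v by simp
    ultimately show ?thesis
      using x v by (simp add: ennreal_mult[symmetric] ennreal_plus[symmetric] del: ennreal_plus)
  qed
  finally show ?thesis .
qed

lemma emeasure_lborel_complex_norm_square_le:
  assumes "r \<ge> 0"
  shows "emeasure lborel {z :: complex. (cmod z)\<^sup>2 \<le> r} = ennreal (pi * r)"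
proof -
  have "(cmod z)\<^sup>2 \<le> r \<longleftrightarrow> cmod z \<le> sqrt r" for z
    by (metis abs_norm_cancel real_sqrt_abs real_sqrt_le_iff)
  then have "{z :: complex. (cmod z)\<^sup>2 \<le> r} = cball 0 (sqrt r)"
    by (simp add: dist_norm set_eq_iff)
  then show ?thesis
    using assms by (simp add: emeasure_cball eval_unit_ball_vol)
qed

lemma cn_density_layer_cake:
  assumes v: "v > 0"
  shows "ennreal (cn_density v z) = (\<integral>\<^sup>+t. ennreal (exp (- t / v) / (pi * v\<^sup>2)) * indicator {(cmod z)\<^sup>2..} t \<partial>lborel)"
proof -
  have "ennreal (exp (- t / v) / (pi * v\<^sup>2)) = ennreal (1 / (pi * v)) * ennreal (exp (- t / v) / v)" for t
    using v by (simp add: ennreal_mult'[symmetric] power2_eq_square)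
  then have "(\<integral>\<^sup>+t. ennreal (exp (- t / v) / (pi * v\<^sup>2)) * indicator {(cmod z)\<^sup>2..} t \<partial>lborel)
      = ennreal (1 / (pi * v)) * (\<integral>\<^sup>+t. ennreal (exp (- t / v) / v) * indicator {(cmod z)\<^sup>2..} t \<partial>lborel)"
    by (simp add: nn_integral_cmult[symmetric] mult.assoc)
  also have "\<dots> = ennreal (cn_density v z)"
    using v by (subst nn_integral_exp_tail[OF v]) (simp add: cn_density_def ennreal_mult[symmetric])
  finally show ?thesis ..
qed

text \<open>Layer-cake argument: writing the density as an integral over levels \<open>t \<ge> |z|\<^sup>2\<close> and
  exchanging the integrals leaves the areas \<open>\<pi> min x t\<close> of discs.\<close>
lemma emeasure_cn_measure_norm_le:
  assumes v: "v > 0" and x: "x \<ge> 0"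
  shows "emeasure (cn_measure v) {z. (cmod z)\<^sup>2 \<le> x} = ennreal (1 - exp (- x / v))"
proof -
  define h where "h z t = ennreal (exp (- t / v) / (pi * v\<^sup>2)) * indicator {z. (cmod z)\<^sup>2 \<le> min x t} z"
    for z :: complex and t :: real
  have [measurable]: "case_prod h \<in> borel_measurable (lborel \<Otimes>\<^sub>M lborel)"
    unfolding h_def by measurable
  have layer: "ennreal (cn_density v z) * indicator {z. (cmod z)\<^sup>2 \<le> x} z = (\<integral>\<^sup>+t. h z t \<partial>lborel)" for z
  proof -
    have "indicator {(cmod z)\<^sup>2..} t * indicator {z. (cmod z)\<^sup>2 \<le> x} z
        = (indicator {z. (cmod z)\<^sup>2 \<le> min x t} z :: ennreal)" for t
      by (auto simp: indicator_def)
    then show ?thesis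
      unfolding cn_density_layer_cake[OF v] h_def by (simp add: nn_integral_multc[symmetric] mult.assoc)
  qed
  have disc: "(\<integral>\<^sup>+z. h z t \<partial>lborel) = ennreal (exp (- t / v) * min x t / v\<^sup>2) * indicator {0..} t" for t
  proof (cases "t \<ge> 0")
    case True
    have "(\<integral>\<^sup>+z. h z t \<partial>lborel) = ennreal (exp (- t / v) / (pi * v\<^sup>2)) * emeasure lborel {z. (cmod z)\<^sup>2 \<le> min x t}"
      unfolding h_def by (rule nn_integral_cmult_indicator) measurable
    also have "emeasure lborel {z :: complex. (cmod z)\<^sup>2 \<le> min x t} = ennreal (pi * min x t)"
      using True x by (intro emeasure_lborel_complex_norm_square_le) simp
    also have "ennreal (exp (- t / v) / (pi * v\<^sup>2)) * ennreal (pi * min x t) = ennreal (exp (- t / v) * min x t / v\<^sup>2)"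
      using v by (simp add: ennreal_mult'[symmetric])
    finally show ?thesis
      using True by simp
  next
    case False
    then have "{z. (cmod z)\<^sup>2 \<le> min x t} = {}"
      by (auto intro: order_trans[OF zero_le_power2])
    then show ?thesis
      using False by (simp add: h_def)
  qed
  have "emeasure (cn_measure v) {z. (cmod z)\<^sup>2 \<le> x}
      = (\<integral>\<^sup>+z. ennreal (cn_density v z) * indicator {z. (cmod z)\<^sup>2 \<le> x} z \<partial>lborel)"
    unfolding cn_measure_def by (subst emeasure_density) auto
  also have "\<dots> = (\<integral>\<^sup>+t. \<integral>\<^sup>+z. h z t \<partial>lborel \<partial>lborel)"
    unfolding layer by (rule pair_sigma_finite.Fubini') (simp_all add: pair_sigma_finite_def sigma_finite_lborel)
  also have "\<dots> = ennreal (1 - exp (- x / v))"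
    unfolding disc by (rule nn_integral_exp_min[OF v x])
  finally show ?thesis .
qed

lemma distr_eq_cn_measure:
  "distributed N lborel Z (\<lambda>z. ennreal (cn_density v z)) \<Longrightarrow> distr N borel Z = cn_measure v"
  unfolding cn_measure_def by (subst distr_cong[OF refl _ refl, of _ lborel]) (auto dest: distributed_distr_eq_density)

lemma distributed_cn_norm_square:
  assumes Z: "distributed N lborel Z (\<lambda>z. ennreal (cn_density v z))" and v: "v > 0"
  shows "distributed N lborel (\<lambda>\<omega>. (cmod (Z \<omega>))\<^sup>2) (exponential_density (1 / v))"
proof (rule exponential_distributedI)
  have [measurable]: "Z \<in> borel_measurable N"
    using distributed_measurable[OF Z] by simp
  show "(\<lambda>\<omega>. (cmod (Z \<omega>))\<^sup>2) \<in> borel_measurable N"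
    by measurable
  fix a :: real
  assume a: "0 \<le> a"
  have "emeasure N {\<omega> \<in> space N. (cmod (Z \<omega>))\<^sup>2 \<le> a} = emeasure (distr N borel Z) {z. (cmod z)\<^sup>2 \<le> a}"
    by (subst emeasure_distr) (auto intro!: arg_cong[where f="emeasure N"])
  also have "\<dots> = ennreal (1 - exp (- a * (1 / v)))"
    using emeasure_cn_measure_norm_le[OF v a] by (simp add: distr_eq_cn_measure[OF Z])
  finally show "emeasure N {\<omega> \<in> space N. (cmod (Z \<omega>))\<^sup>2 \<le> a} = 1 - ennreal (exp (- a * (1 / v)))"
    by (simp add: ennreal_minus ennreal_1[symmetric] del: ennreal_1)
qed (use v in simp)

lemma nn_integral_cn_density_add:
  fixes F :: "complex \<Rightarrow> ennreal"
  assumes a: "a > 0" and b: "b > 0" and [measurable]: "F \<in> borel_measurable borel"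
  shows "(\<integral>\<^sup>+z. ennreal (cn_density a z) * (\<integral>\<^sup>+w. ennreal (cn_density b w) * F (z + w) \<partial>lborel) \<partial>lborel)
       = (\<integral>\<^sup>+w. ennreal (cn_density (a + b) w) * F w \<partial>lborel)"
proof -
  have "(\<integral>\<^sup>+z. ennreal (cn_density a z) * (\<integral>\<^sup>+w. ennreal (cn_density b w) * F (z + w) \<partial>lborel) \<partial>lborel)
      = (\<integral>\<^sup>+z. \<integral>\<^sup>+w. ennreal (cn_density b (w - z) * cn_density a z) * F w \<partial>lborel \<partial>lborel)"
  proof (intro nn_integral_cong)
    fix z
    have "(\<integral>\<^sup>+w. ennreal (cn_density b w) * F (z + w) \<partial>lborel) = (\<integral>\<^sup>+w. ennreal (cn_density b (w - z)) * F w \<partial>lborel)"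
      using nn_integral_lborel_translate[of "\<lambda>w. ennreal (cn_density b (w - z)) * F w" z] by simp
    then show "ennreal (cn_density a z) * (\<integral>\<^sup>+w. ennreal (cn_density b w) * F (z + w) \<partial>lborel)
        = (\<integral>\<^sup>+w. ennreal (cn_density b (w - z) * cn_density a z) * F w \<partial>lborel)"
      using a b by (simp add: nn_integral_cmult[symmetric] ennreal_mult cn_density_nonneg ac_simps)
  qed
  also have "\<dots> = (\<integral>\<^sup>+w. \<integral>\<^sup>+z. ennreal (cn_density b (w - z) * cn_density a z) * F w \<partial>lborel \<partial>lborel)"
    by (rule lborel_pair.Fubini') measurable
  also have "\<dots> = (\<integral>\<^sup>+w. (\<integral>\<^sup>+z. ennreal (cn_density b (w - z) * cn_density a z) \<partial>lborel) * F w \<partial>lborel)"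
    by (simp add: nn_integral_multc)
  also have "\<dots> = (\<integral>\<^sup>+w. ennreal (cn_density (a + b) w) * F w \<partial>lborel)"
    using a b by (simp add: cn_density_convolution add.commute)
  finally show ?thesis .
qed

lemma nn_integral_PiM_cn_linear_combination:
  fixes J :: "'i set" and b :: "'i \<Rightarrow> complex" and F :: "complex \<Rightarrow> ennreal"
  assumes "finite J" and \<Omega>: "\<Omega> > 0" and "F \<in> borel_measurable borel"
  shows "(\<integral>\<^sup>+a. F (\<Sum>j\<in>J. a j * b j) \<partial>PiM J (\<lambda>_. cn_measure \<Omega>)) =
    (if (\<Sum>j\<in>J. (cmod (b j))\<^sup>2) = 0 then F 0
     else \<integral>\<^sup>+z. ennreal (cn_density (\<Omega> * (\<Sum>j\<in>J. (cmod (b j))\<^sup>2)) z) * F z \<partial>lborel)"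
  using assms(1,3)
proof (induction J arbitrary: F rule: finite_induct)
  case empty
  interpret prob_space "PiM {} (\<lambda>_. cn_measure \<Omega>)"
    by (rule prob_space_PiM) (simp add: prob_space_cn_measure \<Omega>)
  show ?case
    by (simp add: emeasure_space_1)
next
  case (insert i J)
  note [measurable] = insert.prems
  interpret cn: prob_space "cn_measure \<Omega>"
    by (rule prob_space_cn_measure[OF \<Omega>])
  interpret product_sigma_finite "\<lambda>_. cn_measure \<Omega>"
    by (simp add: product_sigma_finite_def cn.sigma_finite_measure_axioms)
  define t where "t = (cmod (b i))\<^sup>2"
  define T where "T = (\<Sum>j\<in>J. (cmod (b j))\<^sup>2)"
  have "t \<ge> 0" "T \<ge> 0"
    by (simp_all add: t_def T_def sum_nonneg)
  define G where "G s = (\<integral>\<^sup>+y. F (s + y * b i) \<partial>cn_measure \<Omega>)" for s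
  have [measurable]: "G \<in> borel_measurable borel"
    unfolding G_def by measurable
  have G_eq: "G s = (if t = 0 then F s else \<integral>\<^sup>+w. ennreal (cn_density (\<Omega> * t) w) * F (s + w) \<partial>lborel)" for s
    using nn_integral_cn_measure_mult[OF \<Omega>, of "b i" "\<lambda>w. F (s + w)"]
    by (auto simp: G_def t_def cn.emeasure_space_1[simplified])
  have "(\<integral>\<^sup>+a. F (\<Sum>j\<in>insert i J. a j * b j) \<partial>PiM (insert i J) (\<lambda>_. cn_measure \<Omega>))
      = (\<integral>\<^sup>+a. \<integral>\<^sup>+y. F (\<Sum>j\<in>insert i J. (a(i := y)) j * b j) \<partial>cn_measure \<Omega> \<partial>PiM J (\<lambda>_. cn_measure \<Omega>))"
    by (rule product_nn_integral_insert) (use insert in auto)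
  also have "\<dots> = (\<integral>\<^sup>+a. G (\<Sum>j\<in>J. a j * b j) \<partial>PiM J (\<lambda>_. cn_measure \<Omega>))"
  proof (intro nn_integral_cong)
    fix a
    have "(\<Sum>j\<in>J. (a(i := y)) j * b j) = (\<Sum>j\<in>J. a j * b j)" for y
      using insert by (intro sum.cong) auto
    then show "(\<integral>\<^sup>+y. F (\<Sum>j\<in>insert i J. (a(i := y)) j * b j) \<partial>cn_measure \<Omega>) = G (\<Sum>j\<in>J. a j * b j)"
      using insert by (simp add: G_def add.commute)
  qed
  also have "\<dots> = (if T = 0 then G 0 else \<integral>\<^sup>+z. ennreal (cn_density (\<Omega> * T) z) * G z \<partial>lborel)"
    unfolding T_def by (rule insert.IH) measurable
  also have "\<dots> = (if t + T = 0 then F 0 else \<integral>\<^sup>+z. ennreal (cn_density (\<Omega> * (t + T)) z) * F z \<partial>lborel)"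
    using \<open>t \<ge> 0\<close> \<open>T \<ge> 0\<close> \<Omega> nn_integral_cn_density_add[of "\<Omega> * T" "\<Omega> * t" F]
    by (cases "t = 0"; cases "T = 0") (simp_all add: G_eq distrib_left add.commute)
  finally show ?case
    using insert by (simp add: t_def T_def)
qed

section \<open>An Erlang average as a Bessel function\<close>

lemma nn_integral_indicator_incseq_SUP:
  assumes [measurable]: "f \<in> borel_measurable M" and A: "range A \<subseteq> sets M" "incseq A"
  shows "(\<integral>\<^sup>+x. f x * indicator (\<Union>n. A n) x \<partial>M) = (SUP n. \<integral>\<^sup>+x. f x * indicator (A n) x \<partial>M)"
proof -
  have "(\<Union>n. A n) \<in> sets M"
    using A by auto
  then have "(\<integral>\<^sup>+x. f x * indicator (\<Union>n. A n) x \<partial>M) = emeasure (density M f) (\<Union>n. A n)"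
    by (simp add: emeasure_density)
  also have "\<dots> = (SUP n. emeasure (density M f) (A n))"
    using A by (intro SUP_emeasure_incseq[symmetric]) auto
  also have "\<dots> = (SUP n. \<integral>\<^sup>+x. f x * indicator (A n) x \<partial>M)"
    using A by (auto simp: emeasure_density intro!: SUP_cong)
  finally show ?thesis .
qed

lemma nn_integral_exp_substitution:
  fixes f :: "real \<Rightarrow> ennreal"
  assumes [measurable]: "f \<in> borel_measurable borel" and \<beta>: "\<beta> > 0"
  shows "(\<integral>\<^sup>+t. f t * indicator {0<..} t \<partial>lborel) = (\<integral>\<^sup>+s. f (\<beta> * exp s) * ennreal (\<beta> * exp s) \<partial>lborel)"
proof -
  define A where "A n = {\<beta> * exp (- real n - 1) .. \<beta> * exp (real n + 1)}" for n :: nat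
  define B where "B n = {- real n - 1 .. real n + 1}" for n :: nat
  have "incseq A" "incseq B"
    using \<beta> by (auto simp: incseq_def A_def B_def intro: order_trans[rotated])
  have "(\<Union>n. A n) = {0<..}"
  proof (intro equalityI subsetI)
    fix t :: real
    assume "t \<in> {0<..}"
    then have "t / \<beta> > 0"
      using \<beta> by simp
    obtain n :: nat where n: "\<bar>ln (t / \<beta>)\<bar> \<le> real n"
      using real_arch_simple by blast
    have "exp (- real n - 1) \<le> t / \<beta>"
      using n \<open>t / \<beta> > 0\<close> by (simp add: ln_ge_iff[symmetric])
    moreover have "t / \<beta> \<le> exp (real n + 1)"
      using n \<open>t / \<beta> > 0\<close> by (subst ln_le_cancel_iff[symmetric]) simp_all
    ultimately show "t \<in> (\<Union>n. A n)"
      using \<beta> by (auto simp: A_def field_simps)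
  qed (use \<beta> in \<open>auto simp: A_def intro: less_le_trans[rotated]\<close>)
  have "(\<Union>n. B n) = UNIV"
  proof (intro equalityI subsetI)
    fix s :: real
    obtain n :: nat where "\<bar>s\<bar> \<le> real n"
      using real_arch_simple by blast
    then have "- real n - 1 \<le> s \<and> s \<le> real n + 1"
      by auto
    then show "s \<in> (\<Union>n. B n)"
      by (auto simp: B_def)
  qed simp
  have subst: "(\<integral>\<^sup>+t. f t * indicator (A n) t \<partial>lborel)
      = (\<integral>\<^sup>+s. f (\<beta> * exp s) * ennreal (\<beta> * exp s) * indicator (B n) s \<partial>lborel)" for n
    unfolding A_def B_def
    by (rule nn_integral_substitution_aux[where g="\<lambda>s. \<beta> * exp s" and g'="\<lambda>s. \<beta> * exp s", simplified])
       (use \<beta> in \<open>auto intro!: derivative_eq_intros continuous_intros\<close>)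
  have "(\<integral>\<^sup>+t. f t * indicator {0<..} t \<partial>lborel) = (SUP n. \<integral>\<^sup>+t. f t * indicator (A n) t \<partial>lborel)"
    unfolding \<open>(\<Union>n. A n) = {0<..}\<close>[symmetric]
    by (rule nn_integral_indicator_incseq_SUP[OF _ _ \<open>incseq A\<close>]) (auto simp: A_def)
  also have "\<dots> = (SUP n. \<integral>\<^sup>+s. f (\<beta> * exp s) * ennreal (\<beta> * exp s) * indicator (B n) s \<partial>lborel)"
    by (simp only: subst)
  also have "\<dots> = (\<integral>\<^sup>+s. f (\<beta> * exp s) * ennreal (\<beta> * exp s) * indicator (\<Union>n. B n) s \<partial>lborel)"
    by (rule nn_integral_indicator_incseq_SUP[OF _ _ \<open>incseq B\<close>, symmetric]) (auto simp: B_def)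
  finally show ?thesis
    by (simp add: \<open>(\<Union>n. B n) = UNIV\<close>)
qed

lemma nn_integral_lborel_symmetrize:
  fixes g :: "real \<Rightarrow> ennreal"
  assumes [measurable]: "g \<in> borel_measurable borel"
  shows "(\<integral>\<^sup>+s. g s \<partial>lborel) = (\<integral>\<^sup>+s. (g s + g (- s)) * indicator {0..} s \<partial>lborel)"
proof -
  have "(\<integral>\<^sup>+s. g s * indicator {..<0} s \<partial>lborel) = (\<integral>\<^sup>+s. g (- s) * indicator {0<..} s \<partial>lborel)"
    by (subst lborel_distr_uminus[symmetric]) (simp add: nn_integral_distr indicator_def)
  also have "\<dots> = (\<integral>\<^sup>+s. g (- s) * indicator {0..} s \<partial>lborel)"
    by (intro nn_integral_cong_AE) (use AE_lborel_singleton[of 0] in \<open>auto split: split_indicator\<close>)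
  finally have neg: "(\<integral>\<^sup>+s. g s * indicator {..<0} s \<partial>lborel) = (\<integral>\<^sup>+s. g (- s) * indicator {0..} s \<partial>lborel)" .
  have "(\<integral>\<^sup>+s. g s \<partial>lborel) = (\<integral>\<^sup>+s. g s * indicator {0..} s + g s * indicator {..<0} s \<partial>lborel)"
    by (intro nn_integral_cong) (simp split: split_indicator)
  also have "\<dots> = (\<integral>\<^sup>+s. g s * indicator {0..} s + g (- s) * indicator {0..} s \<partial>lborel)"
    by (simp add: nn_integral_add neg)
  finally show ?thesis
    by (simp add: distrib_right)
qed

lemma erlang_density_exp_substitution:
  fixes l c s :: real and k :: nat
  assumes l: "l > 0" and c: "c > 0"
  defines "\<beta> \<equiv> sqrt (c / l)"
  shows "erlang_density k l (\<beta> * exp s) * exp (- c / (\<beta> * exp s)) * (\<beta> * exp s)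
       = (l * c) powr (real (Suc k) / 2) / fact k * (exp (real (Suc k) * s) * exp (- (2 * sqrt (l * c)) * cosh s))"
proof -
  define t where "t = \<beta> * exp s"
  have "\<beta> > 0"
    using l c by (simp add: \<beta>_def)
  then have "t > 0"
    by (simp add: t_def)
  have "l * \<beta> = sqrt (l\<^sup>2 * (c / l))"
    using l by (simp only: \<beta>_def real_sqrt_mult real_sqrt_abs abs_of_pos)
  also have "l\<^sup>2 * (c / l) = l * c"
    using l by (simp add: power2_eq_square)
  finally have lt: "l * t = sqrt (l * c) * exp s"
    by (simp add: t_def mult.assoc[symmetric])
  have "c / \<beta> = sqrt (c\<^sup>2 / (c / l))"
    using c by (simp only: \<beta>_def real_sqrt_divide real_sqrt_abs abs_of_pos)
  also have "c\<^sup>2 / (c / l) = l * c"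
    using c l by (simp add: power2_eq_square)
  finally have ct: "c / t = sqrt (l * c) * exp (- s)"
    by (simp add: t_def exp_minus divide_inverse mult.assoc[symmetric])
  have "erlang_density k l t * exp (- c / t) * t = (l * t) ^ Suc k / fact k * (exp (- l * t) * exp (- c / t))"
    using \<open>t > 0\<close> by (simp add: erlang_density_def power_mult_distrib field_simps)
  also have "exp (- l * t) * exp (- c / t) = exp (- (l * t + c / t))"
    by (simp add: mult_exp_exp)
  also have "(l * t) ^ Suc k = (l * c) powr (real (Suc k) / 2) * exp (real (Suc k) * s)"
  proof -
    have root: "sqrt (l * c) ^ Suc k = (l * c) powr (real (Suc k) / 2)"
      using l c by (simp add: powr_half_sqrt[symmetric] powr_power powr_add[symmetric] add_divide_distrib)
    show ?thesis
      by (simp only: lt power_mult_distrib root exp_of_nat_mult)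
  qed
  also have "l * t + c / t = 2 * sqrt (l * c) * cosh s"
    by (simp add: lt ct cosh_field_def field_simps)
  finally show ?thesis
    by (simp add: t_def mult_ac)
qed

lemma borel_measurable_cosh [measurable]: "(cosh :: real \<Rightarrow> real) \<in> borel_measurable borel"
  by (intro borel_measurable_continuous_onI continuous_intros)

lemma ennreal_besselK:
  assumes "(\<integral>\<^sup>+s. ennreal (exp (- z * cosh s) * cosh (\<nu> * s)) * indicator {0..} s \<partial>lborel) \<noteq> \<infinity>"
  shows "ennreal (besselK \<nu> z) = (\<integral>\<^sup>+s. ennreal (exp (- z * cosh s) * cosh (\<nu> * s)) * indicator {0..} s \<partial>lborel)"
proof -
  define f where "f s = indicator {0..} s * (exp (- z * cosh s) * cosh (\<nu> * s))" for s :: real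
  have f_eq: "(\<integral>\<^sup>+s. ennreal (f s) \<partial>lborel)
      = (\<integral>\<^sup>+s. ennreal (exp (- z * cosh s) * cosh (\<nu> * s)) * indicator {0..} s \<partial>lborel)"
    by (intro nn_integral_cong) (simp add: f_def split: split_indicator)
  have "(\<integral>\<^sup>+s. ennreal (f s) \<partial>lborel) \<noteq> \<infinity>"
    unfolding f_eq by (rule assms)
  then obtain r where r: "(\<integral>\<^sup>+s. ennreal (f s) \<partial>lborel) = ennreal r" "r \<ge> 0"
    by (metis ennreal_cases infinity_ennreal_def)
  have [measurable]: "f \<in> borel_measurable borel"
    unfolding f_def by measurable
  have "has_bochner_integral lborel f r"
    by (rule has_bochner_integral_nn_integral) (use r in \<open>auto simp: f_def\<close>)
  then have "integral\<^sup>L lborel f = r"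
    by (rule has_bochner_integral_integral_eq)
  then have "besselK \<nu> z = r"
    by (simp add: besselK_def set_lebesgue_integral_def f_def[abs_def])
  then show ?thesis
    using r f_eq by simp
qed

lemma nn_integral_exp_mult_exp_cosh:
  "(\<integral>\<^sup>+s. ennreal (exp (\<nu> * s) * exp (- z * cosh s)) \<partial>lborel)
    = 2 * (\<integral>\<^sup>+s. ennreal (exp (- z * cosh s) * cosh (\<nu> * s)) * indicator {0..} s \<partial>lborel)"
proof -
  define g where "g s = exp (\<nu> * s) * exp (- z * cosh s)" for s
  define E where "E s = exp (- z * cosh s) * cosh (\<nu> * s)" for s
  have "ennreal (g s) + ennreal (g (- s)) = 2 * ennreal (E s)" for s
  proof -
    have "ennreal (g s) + ennreal (g (- s)) = ennreal (g s + g (- s))"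
      by (rule ennreal_plus[symmetric]) (simp_all add: g_def)
    also have "g s + g (- s) = 2 * E s"
      by (simp add: g_def E_def cosh_field_def exp_minus field_simps)
    also have "ennreal (2 * E s) = 2 * ennreal (E s)"
      by (simp add: E_def ennreal_mult)
    finally show ?thesis .
  qed
  then have "(\<integral>\<^sup>+s. ennreal (g s) \<partial>lborel) = (\<integral>\<^sup>+s. 2 * (ennreal (E s) * indicator {0..} s) \<partial>lborel)"
    by (subst nn_integral_lborel_symmetrize) (simp_all add: g_def mult.assoc)
  then show ?thesis
    by (simp add: g_def E_def nn_integral_cmult)
qed

text \<open>Substituting \<open>t = sqrt (c / l) * exp s\<close> turns the exponent \<open>- l t - c / t\<close> into
  \<open>- 2 sqrt (l c) cosh s\<close>.\<close>
lemma nn_integral_erlang_exp_inverse_cosh: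
  fixes l c :: real and k :: nat
  assumes l: "l > 0" and c: "c > 0"
  shows "(\<integral>\<^sup>+t. ennreal (erlang_density k l t * exp (- c / t)) \<partial>lborel)
       = ennreal (2 * (l * c) powr (real (Suc k) / 2) / fact k)
         * (\<integral>\<^sup>+s. ennreal (exp (- (2 * sqrt (l * c)) * cosh s) * cosh (real (Suc k) * s)) * indicator {0..} s \<partial>lborel)"
proof -
  define \<beta> where "\<beta> = sqrt (c / l)"
  define C where "C = (l * c) powr (real (Suc k) / 2) / fact k"
  define g where "g s = exp (real (Suc k) * s) * exp (- (2 * sqrt (l * c)) * cosh s)" for s
  have "\<beta> > 0" "C \<ge> 0" "\<And>s. g s \<ge> 0"
    using l c by (simp_all add: \<beta>_def C_def g_def)
  have "(\<integral>\<^sup>+t. ennreal (erlang_density k l t * exp (- c / t)) \<partial>lborel)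
      = (\<integral>\<^sup>+t. ennreal (erlang_density k l t * exp (- c / t)) * indicator {0<..} t \<partial>lborel)"
    using AE_lborel_singleton[of 0]
    by (intro nn_integral_cong_AE, eventually_elim) (auto simp: erlang_density_def split: split_indicator)
  also have "\<dots> = (\<integral>\<^sup>+s. ennreal (erlang_density k l (\<beta> * exp s) * exp (- c / (\<beta> * exp s)) * (\<beta> * exp s)) \<partial>lborel)"
    using \<open>\<beta> > 0\<close> l by (subst nn_integral_exp_substitution) (auto simp: ennreal_mult'')
  also have "\<dots> = (\<integral>\<^sup>+s. ennreal C * ennreal (g s) \<partial>lborel)"
  proof (intro nn_integral_cong)
    fix s
    have "erlang_density k l (\<beta> * exp s) * exp (- c / (\<beta> * exp s)) * (\<beta> * exp s) = C * g s"
      using erlang_density_exp_substitution[OF l c, of k s] by (simp add: \<beta>_def C_def g_def)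
    then show "ennreal (erlang_density k l (\<beta> * exp s) * exp (- c / (\<beta> * exp s)) * (\<beta> * exp s))
        = ennreal C * ennreal (g s)"
      using \<open>C \<ge> 0\<close> \<open>\<And>s. g s \<ge> 0\<close> by (simp add: ennreal_mult)
  qed
  also have "\<dots> = ennreal C * (\<integral>\<^sup>+s. ennreal (g s) \<partial>lborel)"
    by (rule nn_integral_cmult) (simp add: g_def)
  also have "(\<integral>\<^sup>+s. ennreal (g s) \<partial>lborel)
      = 2 * (\<integral>\<^sup>+s. ennreal (exp (- (2 * sqrt (l * c)) * cosh s) * cosh (real (Suc k) * s)) * indicator {0..} s \<partial>lborel)"
    unfolding g_def by (rule nn_integral_exp_mult_exp_cosh)
  also have "ennreal C * (2 * X) = ennreal (2 * (l * c) powr (real (Suc k) / 2) / fact k) * X" for X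
  proof -
    have "ennreal (2 * (l * c) powr (real (Suc k) / 2) / fact k) = ennreal 2 * ennreal C"
      using \<open>C \<ge> 0\<close> by (subst ennreal_mult[symmetric]) (simp_all add: C_def)
    then show ?thesis
      by (simp add: mult_ac)
  qed
  finally show ?thesis .
qed

text \<open>\<open>1 - cascade_tail Q y\<close> will be the distribution function, at \<open>y\<close>, of the cascade gain
  \<open>|\<Sum>\<^sub>k g\<^sub>k h\<^sub>k|\<^sup>2 / (\<Omega>\<^sub>s\<^sub>r \<Omega>\<^sub>r\<^sub>d)\<close> of \<open>Q\<close> elements.\<close>
definition cascade_tail :: "nat \<Rightarrow> real \<Rightarrow> real" where
  "cascade_tail Q y = 2 / Gamma (real Q) * y powr (real Q / 2) * besselK (real Q) (2 * sqrt y)"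

lemma nn_integral_erlang_exp_inverse:
  fixes l c :: real and k :: nat
  assumes l: "l > 0" and c: "c > 0"
  shows "(\<integral>\<^sup>+t. ennreal (erlang_density k l t * exp (- c / t)) \<partial>lborel) = ennreal (cascade_tail (Suc k) (l * c))"
proof -
  define C where "C = 2 * (l * c) powr (real (Suc k) / 2) / fact k"
  define J where "J = (\<integral>\<^sup>+s. ennreal (exp (- (2 * sqrt (l * c)) * cosh s) * cosh (real (Suc k) * s)) * indicator {0..} s \<partial>lborel)"
  have "C > 0"
    using l c by (simp add: C_def)
  have E: "(\<integral>\<^sup>+t. ennreal (erlang_density k l t * exp (- c / t)) \<partial>lborel) = ennreal C * J"
    unfolding C_def J_def by (rule nn_integral_erlang_exp_inverse_cosh[OF l c])
  \<comment> \<open>The integrand is dominated by the Erlang density, so the Bessel integral is finite.\<close>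
  have "ennreal C * J \<le> (\<integral>\<^sup>+t. ennreal (erlang_density k l t) \<partial>lborel)"
    unfolding E[symmetric]
  proof (intro nn_integral_mono ennreal_leI)
    fix t
    show "erlang_density k l t * exp (- c / t) \<le> erlang_density k l t"
    proof (cases "t < 0")
      case False
      then show ?thesis
        using l c by (intro mult_left_le) simp_all
    qed (simp add: erlang_density_def)
  qed
  also have "\<dots> = 1"
    using nn_integral_erlang_ith_moment[OF l, of k 0] by simp
  finally have "J \<noteq> \<infinity>"
    using \<open>C > 0\<close> by (auto simp: ennreal_mult_eq_top_iff top_unique)
  then have J_eq: "J = ennreal (besselK (real (Suc k)) (2 * sqrt (l * c)))"
    unfolding J_def by (rule ennreal_besselK[symmetric])
  have "Gamma (real (Suc k)) = fact k"
    using Gamma_fact[of k, where 'a=real] by (simp add: add.commute)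
  then have "cascade_tail (Suc k) (l * c) = C * besselK (real (Suc k)) (2 * sqrt (l * c))"
    by (simp add: cascade_tail_def C_def)
  then show ?thesis
    unfolding E J_eq using \<open>C > 0\<close> by (simp add: ennreal_mult')
qed

lemma besselK_nonneg: "besselK \<nu> z \<ge> 0"
  unfolding besselK_def set_lebesgue_integral_def
  by (intro integral_nonneg_AE) (auto simp: indicator_def intro!: mult_nonneg_nonneg)

lemma cascade_tail_nonneg: "Q > 0 \<Longrightarrow> 0 \<le> cascade_tail Q y"
  unfolding cascade_tail_def
  by (intro mult_nonneg_nonneg divide_nonneg_nonneg besselK_nonneg less_imp_le[OF Gamma_real_pos]) auto

lemma nn_integral_erlang_one_minus_exp_inverse:
  fixes l c :: real and k :: nat
  assumes l: "l > 0" and c: "c > 0"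
  shows "(\<integral>\<^sup>+t. ennreal (erlang_density k l t) * ennreal (1 - exp (- c / t)) \<partial>lborel)
      = ennreal (1 - cascade_tail (Suc k) (l * c))"
    and "cascade_tail (Suc k) (l * c) \<le> 1"
proof -
  let ?e = "\<lambda>t. ennreal (erlang_density k l t)"
  have split: "?e t * ennreal (1 - exp (- c / t)) + ennreal (erlang_density k l t * exp (- c / t)) = ?e t" for t
  proof (cases "t < 0")
    case False
    then have "exp (- c / t) \<le> 1"
      using c by simp
    then have "?e t * ennreal (1 - exp (- c / t)) + ennreal (erlang_density k l t * exp (- c / t))
        = ennreal (erlang_density k l t * (1 - exp (- c / t)) + erlang_density k l t * exp (- c / t))"
      using l by (simp add: ennreal_mult)
    then show ?thesis
      by (simp add: algebra_simps)
  qed (simp add: erlang_density_def)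
  have "(\<integral>\<^sup>+t. ?e t * ennreal (1 - exp (- c / t)) \<partial>lborel) + ennreal (cascade_tail (Suc k) (l * c))
      = (\<integral>\<^sup>+t. ?e t * ennreal (1 - exp (- c / t)) + ennreal (erlang_density k l t * exp (- c / t)) \<partial>lborel)"
    by (simp add: nn_integral_add nn_integral_erlang_exp_inverse[OF l c, symmetric])
  also have "\<dots> = 1"
    unfolding split using nn_integral_erlang_ith_moment[OF l, of k 0] by simp
  finally have sum: "(\<integral>\<^sup>+t. ?e t * ennreal (1 - exp (- c / t)) \<partial>lborel) + ennreal (cascade_tail (Suc k) (l * c)) = 1" .
  then show "cascade_tail (Suc k) (l * c) \<le> 1"
    by (metis add.commute ennreal_le_1 le_iff_add)
  have "0 \<le> cascade_tail (Suc k) (l * c)"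
    by (simp add: cascade_tail_nonneg)
  then show "(\<integral>\<^sup>+t. ?e t * ennreal (1 - exp (- c / t)) \<partial>lborel) = ennreal (1 - cascade_tail (Suc k) (l * c))"
    using sum by (metis ennreal_1 ennreal_add_diff_cancel_right ennreal_minus ennreal_neq_top)
qed

section \<open>The cascade gain of one block\<close>

lemma (in prob_space) nn_integral_indep_vars_PiM:
  assumes indep: "indep_vars (\<lambda>_. borel) X I" and J: "J \<subseteq> I" "J \<noteq> {}"
    and D: "\<And>i. i \<in> J \<Longrightarrow> distr M borel (X i) = D i"
    and F: "F \<in> borel_measurable (PiM J (\<lambda>_. borel))"
  shows "(\<integral>\<^sup>+\<omega>. F (\<lambda>i\<in>J. X i \<omega>) \<partial>M) = (\<integral>\<^sup>+y. F y \<partial>PiM J D)"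
proof -
  have rv: "random_variable borel (X i)" if "i \<in> J" for i
    using indep that J by (auto simp: indep_vars_def)
  then have "(\<lambda>\<omega>. \<lambda>i\<in>J. X i \<omega>) \<in> measurable M (PiM J (\<lambda>_. borel))"
    by (rule measurable_restrict)
  then have "(\<integral>\<^sup>+\<omega>. F (\<lambda>i\<in>J. X i \<omega>) \<partial>M) = (\<integral>\<^sup>+y. F y \<partial>distr M (PiM J (\<lambda>_. borel)) (\<lambda>\<omega>. \<lambda>i\<in>J. X i \<omega>))"
    using F by (simp add: nn_integral_distr)
  also have "distr M (PiM J (\<lambda>_. borel)) (\<lambda>\<omega>. \<lambda>i\<in>J. X i \<omega>) = PiM J (\<lambda>i. distr M borel (X i))"
    using indep_vars_iff_distr_eq_PiM'[where I=J and M'="\<lambda>_. borel" and X=X] rv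
      indep_vars_subset[OF indep J(1)] J(2) by simp
  also have "\<dots> = PiM J D"
    using D by (rule PiM_cong[OF refl])
  finally show ?thesis .
qed

lemma nn_integral_PiM_cn_linear_combination_le:
  fixes J :: "'i set" and b :: "'i \<Rightarrow> complex"
  assumes "finite J" and \<Omega>: "\<Omega> > 0" and x: "x \<ge> 0"
  defines "T \<equiv> \<Sum>j\<in>J. (cmod (b j))\<^sup>2"
  shows "(\<integral>\<^sup>+a. indicator {z. (cmod z)\<^sup>2 \<le> x} (\<Sum>j\<in>J. a j * b j) \<partial>PiM J (\<lambda>_. cn_measure \<Omega>))
      = (if T = 0 then 1 else ennreal (1 - exp (- x / (\<Omega> * T))))"
proof -
  have "T \<ge> 0"
    by (simp add: T_def sum_nonneg)
  have "(\<integral>\<^sup>+z. ennreal (cn_density (\<Omega> * T) z) * indicator {z. (cmod z)\<^sup>2 \<le> x} z \<partial>lborel)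
      = ennreal (1 - exp (- x / (\<Omega> * T)))" if "T \<noteq> 0"
    using emeasure_cn_measure_norm_le[of "\<Omega> * T" x] \<open>T \<ge> 0\<close> that \<Omega> x
    by (simp add: cn_measure_def emeasure_density)
  then show ?thesis
    using nn_integral_PiM_cn_linear_combination[OF assms(1) \<Omega>, of "indicator {z. (cmod z)\<^sup>2 \<le> x}" b] x
    by (simp add: T_def)
qed

lemma measurable_PiM_component_borel:
  assumes "i \<in> I" and "\<And>i. sets (N i) = sets borel"
  shows "(\<lambda>y. y i) \<in> borel_measurable (PiM I N)"
  using measurable_component_singleton[OF assms(1), of N] assms(2) by (simp cong: measurable_cong_sets)

lemma nn_integral_PiM_bilinear_cn_le:
  fixes M :: "'k + 'k \<Rightarrow> complex measure" and K :: "'k set"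
  assumes "product_sigma_finite M" and K: "finite K" and \<Omega>: "\<Omega> > 0" and x: "x \<ge> 0"
    and sets_M: "\<And>i. sets (M i) = sets borel" and cn: "\<And>k. k \<in> K \<Longrightarrow> M (Inl k) = cn_measure \<Omega>"
  defines "\<phi> T \<equiv> if T = 0 then 1 else ennreal (1 - exp (- x / (\<Omega> * T)))"
  shows "(\<integral>\<^sup>+y. indicator {z. (cmod z)\<^sup>2 \<le> x} (\<Sum>k\<in>K. y (Inl k) * y (Inr k)) \<partial>PiM (Inr ` K \<union> Inl ` K) M)
      = (\<integral>\<^sup>+u. \<phi> (\<Sum>k\<in>K. (cmod (u (Inr k)))\<^sup>2) \<partial>PiM (Inr ` K) M)"
proof -
  interpret product_sigma_finite M
    by fact
  define S where "S = {z::complex. (cmod z)\<^sup>2 \<le> x}"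
  define F :: "('k + 'k \<Rightarrow> complex) \<Rightarrow> ennreal" where "F y = indicator S (\<Sum>k\<in>K. y (Inl k) * y (Inr k))" for y
  have "(\<lambda>y. \<Sum>k\<in>K. y (Inl k) * y (Inr k)) \<in> borel_measurable (PiM (Inr ` K \<union> Inl ` K) M)"
    using sets_M by (intro borel_measurable_sum borel_measurable_times measurable_PiM_component_borel) auto
  then have "F \<in> borel_measurable (PiM (Inr ` K \<union> Inl ` K) M)"
    unfolding F_def S_def by (rule measurable_compose) measurable
  then have "(\<integral>\<^sup>+y. F y \<partial>PiM (Inr ` K \<union> Inl ` K) M)
      = (\<integral>\<^sup>+u. \<integral>\<^sup>+v. F (merge (Inr ` K) (Inl ` K) (u, v)) \<partial>PiM (Inl ` K) M \<partial>PiM (Inr ` K) M)"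
    using K by (intro product_nn_integral_fold) auto
  also have "\<dots> = (\<integral>\<^sup>+u. \<phi> (\<Sum>k\<in>K. (cmod (u (Inr k)))\<^sup>2) \<partial>PiM (Inr ` K) M)"
  proof (intro nn_integral_cong)
    fix u :: "'k + 'k \<Rightarrow> complex"
    define b where "b j = u (Inr (projl j))" for j :: "'k + 'k"
    have "PiM (Inl ` K) M = PiM (Inl ` K) (\<lambda>_. cn_measure \<Omega>)"
      by (intro PiM_cong) (auto simp: cn)
    moreover have "F (merge (Inr ` K) (Inl ` K) (u, v)) = indicator S (\<Sum>j\<in>Inl ` K. v j * b j)" for v
    proof -
      have "(\<Sum>k\<in>K. merge (Inr ` K) (Inl ` K) (u, v) (Inl k) * merge (Inr ` K) (Inl ` K) (u, v) (Inr k))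
          = (\<Sum>k\<in>K. v (Inl k) * u (Inr k))"
        by (intro sum.cong) (auto simp: merge_def)
      then show ?thesis
        by (simp add: F_def b_def sum.reindex inj_on_def)
    qed
    ultimately have "(\<integral>\<^sup>+v. F (merge (Inr ` K) (Inl ` K) (u, v)) \<partial>PiM (Inl ` K) M)
        = (\<integral>\<^sup>+v. indicator S (\<Sum>j\<in>Inl ` K. v j * b j) \<partial>PiM (Inl ` K) (\<lambda>_. cn_measure \<Omega>))"
      by (simp only:)
    also have "\<dots> = \<phi> (\<Sum>j\<in>Inl ` K. (cmod (b j))\<^sup>2)"
      unfolding S_def \<phi>_def by (intro nn_integral_PiM_cn_linear_combination_le) (use K \<Omega> x in auto)
    also have "(\<Sum>j\<in>Inl ` K. (cmod (b j))\<^sup>2) = (\<Sum>k\<in>K. (cmod (u (Inr k)))\<^sup>2)"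
      by (simp add: b_def sum.reindex inj_on_def)
    finally show "(\<integral>\<^sup>+v. F (merge (Inr ` K) (Inl ` K) (u, v)) \<partial>PiM (Inl ` K) M) = \<phi> (\<Sum>k\<in>K. (cmod (u (Inr k)))\<^sup>2)" .
  qed
  finally show ?thesis
    by (simp only: F_def S_def)
qed

lemma borel_measurable_cascade_gain:
  assumes "\<And>k. k \<in> K \<Longrightarrow> g k \<in> borel_measurable M" and "\<And>k. k \<in> K \<Longrightarrow> h k \<in> borel_measurable M"
  shows "(\<lambda>\<omega>. (cmod (\<Sum>k\<in>K. g k \<omega> * h k \<omega>))\<^sup>2) \<in> borel_measurable M"
proof -
  have "(\<lambda>\<omega>. \<Sum>k\<in>K. g k \<omega> * h k \<omega>) \<in> borel_measurable M"
    using assms by (intro borel_measurable_sum borel_measurable_times)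
  then show ?thesis
    by (rule measurable_compose) measurable
qed

text \<open>Conditioning on \<open>h\<close>: given \<open>h = b\<close>, the sum \<open>\<Sum>k. g k * b k\<close> is \<open>CN(0, \<Omega> \<Sum>k. |b k|\<^sup>2)\<close>.\<close>
lemma (in prob_space) emeasure_cn_bilinear_le:
  fixes g h :: "'k \<Rightarrow> 'a \<Rightarrow> complex" and K :: "'k set"
  assumes K: "finite K" "K \<noteq> {}" and \<Omega>: "\<Omega> > 0" and x: "x \<ge> 0"
    and indep: "indep_vars (\<lambda>_. borel) (\<lambda>i. case i of Inl k \<Rightarrow> g k | Inr k \<Rightarrow> h k) (Inl ` K \<union> Inr ` K)"
    and g: "\<And>k. k \<in> K \<Longrightarrow> distr M borel (g k) = cn_measure \<Omega>"
  defines "\<phi> T \<equiv> if T = 0 then 1 else ennreal (1 - exp (- x / (\<Omega> * T)))"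
  shows "emeasure M {\<omega> \<in> space M. (cmod (\<Sum>k\<in>K. g k \<omega> * h k \<omega>))\<^sup>2 \<le> x}
      = (\<integral>\<^sup>+\<omega>. \<phi> (\<Sum>k\<in>K. (cmod (h k \<omega>))\<^sup>2) \<partial>M)"
proof -
  define I where "I = Inr ` K \<union> Inl ` K"
  define Y where "Y = (\<lambda>i. case i of Inl k \<Rightarrow> g k | Inr k \<Rightarrow> h k)"
  \<comment> \<open>Outside \<open>I\<close> the factors are irrelevant; \<open>cn_measure \<Omega>\<close> just makes them probability spaces.\<close>
  define D where "D i = (if i \<in> I then distr M borel (Y i) else cn_measure \<Omega>)" for i
  have indepY: "indep_vars (\<lambda>_. borel) Y I"
    using indep by (simp add: Y_def I_def Un_commute)
  have rv: "random_variable borel (Y i)" if "i \<in> I" for i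
    using indepY that by (simp add: indep_vars_def)
  have "prob_space (D i)" for i
    by (simp add: D_def prob_space_cn_measure \<Omega> rv prob_space_distr)
  then have D: "product_sigma_finite D"
    by (simp add: product_sigma_finite_def prob_space_imp_sigma_finite)
  have law: "(\<integral>\<^sup>+\<omega>. F (\<lambda>i\<in>J. Y i \<omega>) \<partial>M) = (\<integral>\<^sup>+y. F y \<partial>PiM J D)"
    if "J \<subseteq> I" "J \<noteq> {}" "F \<in> borel_measurable (PiM J (\<lambda>_. borel))" for J F
    using that by (intro nn_integral_indep_vars_PiM[OF indepY]) (auto simp: D_def)
  define S where "S = {z::complex. (cmod z)\<^sup>2 \<le> x}"
  have S_meas: "(\<lambda>y. indicator S (\<Sum>k\<in>K. y (Inl k) * y (Inr k)) :: ennreal) \<in> borel_measurable (PiM I (\<lambda>_. borel))"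
    unfolding S_def I_def by measurable
  have \<phi>_meas: "(\<lambda>u. \<phi> (\<Sum>k\<in>K. (cmod (u (Inr k)))\<^sup>2)) \<in> borel_measurable (PiM (Inr ` K) (\<lambda>_. borel))"
    unfolding \<phi>_def by measurable
  have "(\<lambda>\<omega>. (cmod (\<Sum>k\<in>K. g k \<omega> * h k \<omega>))\<^sup>2) \<in> borel_measurable M"
    using rv by (intro borel_measurable_cascade_gain) (force simp: I_def Y_def)+
  then have "{\<omega> \<in> space M. (cmod (\<Sum>k\<in>K. g k \<omega> * h k \<omega>))\<^sup>2 \<le> x} \<in> sets M"
    by (simp add: borel_measurable_iff_le)
  then have "emeasure M {\<omega> \<in> space M. (cmod (\<Sum>k\<in>K. g k \<omega> * h k \<omega>))\<^sup>2 \<le> x}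
      = (\<integral>\<^sup>+\<omega>. indicator {\<omega> \<in> space M. (cmod (\<Sum>k\<in>K. g k \<omega> * h k \<omega>))\<^sup>2 \<le> x} \<omega> \<partial>M)"
    by (rule nn_integral_indicator[symmetric])
  also have "\<dots> = (\<integral>\<^sup>+\<omega>. indicator S (\<Sum>k\<in>K. (\<lambda>i\<in>I. Y i \<omega>) (Inl k) * (\<lambda>i\<in>I. Y i \<omega>) (Inr k)) \<partial>M)"
  proof (intro nn_integral_cong)
    fix \<omega>
    assume "\<omega> \<in> space M"
    moreover have "(\<Sum>k\<in>K. (\<lambda>i\<in>I. Y i \<omega>) (Inl k) * (\<lambda>i\<in>I. Y i \<omega>) (Inr k)) = (\<Sum>k\<in>K. g k \<omega> * h k \<omega>)"
      by (intro sum.cong) (auto simp: I_def Y_def)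
    ultimately show "indicator {\<omega> \<in> space M. (cmod (\<Sum>k\<in>K. g k \<omega> * h k \<omega>))\<^sup>2 \<le> x} \<omega>
        = indicator S (\<Sum>k\<in>K. (\<lambda>i\<in>I. Y i \<omega>) (Inl k) * (\<lambda>i\<in>I. Y i \<omega>) (Inr k))"
      by (simp add: S_def indicator_def)
  qed
  also have "\<dots> = (\<integral>\<^sup>+y. indicator S (\<Sum>k\<in>K. y (Inl k) * y (Inr k)) \<partial>PiM I D)"
    using K S_meas by (intro law) (auto simp: I_def)
  also have "\<dots> = (\<integral>\<^sup>+u. \<phi> (\<Sum>k\<in>K. (cmod (u (Inr k)))\<^sup>2) \<partial>PiM (Inr ` K) D)"
    unfolding I_def S_def \<phi>_def using D K \<Omega> x
    by (intro nn_integral_PiM_bilinear_cn_le) (auto simp: D_def I_def Y_def g)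
  also have "\<dots> = (\<integral>\<^sup>+\<omega>. \<phi> (\<Sum>k\<in>K. (cmod (h k \<omega>))\<^sup>2) \<partial>M)"
    using K \<phi>_meas by (subst law[symmetric]) (auto simp: I_def Y_def)
  finally show ?thesis .
qed

lemma (in prob_space) distributed_sum_cn_norm_square:
  assumes "finite J" "J \<noteq> {}" and v: "v > 0" and indep: "indep_vars (\<lambda>_. borel) Z J"
    and Z: "\<And>j. j \<in> J \<Longrightarrow> distributed M lborel (Z j) (\<lambda>z. ennreal (cn_density v z))"
  shows "distributed M lborel (\<lambda>\<omega>. \<Sum>j\<in>J. (cmod (Z j \<omega>))\<^sup>2) (erlang_density (card J - 1) (1 / v))"
proof (rule exponential_distributed_sum)
  show "indep_vars (\<lambda>_. borel) (\<lambda>j \<omega>. (cmod (Z j \<omega>))\<^sup>2) J"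
    using indep_vars_compose2[OF indep, of "\<lambda>_ z. (cmod z)\<^sup>2" "\<lambda>_. borel"] by simp
qed (use assms distributed_cn_norm_square in auto)

lemma (in prob_space) prob_cascade_gain_le:
  fixes g h :: "'k \<Rightarrow> 'a \<Rightarrow> complex" and K :: "'k set"
  assumes K: "finite K" "K \<noteq> {}" and sr: "\<Omega>sr > 0" and rd: "\<Omega>rd > 0" and \<tau>: "\<tau> > 0"
    and indep: "indep_vars (\<lambda>_. borel) (\<lambda>i. case i of Inl k \<Rightarrow> g k | Inr k \<Rightarrow> h k) (Inl ` K \<union> Inr ` K)"
    and g: "\<And>k. k \<in> K \<Longrightarrow> distributed M lborel (g k) (\<lambda>z. ennreal (cn_density \<Omega>sr z))"
    and h: "\<And>k. k \<in> K \<Longrightarrow> distributed M lborel (h k) (\<lambda>z. ennreal (cn_density \<Omega>rd z))"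
  shows "prob {\<omega> \<in> space M. (cmod (\<Sum>k\<in>K. g k \<omega> * h k \<omega>))\<^sup>2 \<le> \<tau>}
      = 1 - cascade_tail (card K) (\<tau> / (\<Omega>sr * \<Omega>rd))"
proof -
  define \<phi> where "\<phi> T = (if T = 0 then 1 else ennreal (1 - exp (- \<tau> / (\<Omega>sr * T))))" for T
  define l c where "l = 1 / \<Omega>rd" and "c = \<tau> / \<Omega>sr"
  have "l > 0" "c > 0"
    using rd sr \<tau> by (simp_all add: l_def c_def)
  have "Suc (card K - 1) = card K"
    using K by (simp add: card_gt_0_iff)
  moreover have "l * c = \<tau> / (\<Omega>sr * \<Omega>rd)"
    by (simp add: l_def c_def)
  ultimately have tail:
    "(\<integral>\<^sup>+t. ennreal (erlang_density (card K - 1) l t) * ennreal (1 - exp (- c / t)) \<partial>lborel)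
       = ennreal (1 - cascade_tail (card K) (\<tau> / (\<Omega>sr * \<Omega>rd)))"
    "cascade_tail (card K) (\<tau> / (\<Omega>sr * \<Omega>rd)) \<le> 1"
    using nn_integral_erlang_one_minus_exp_inverse[OF \<open>l > 0\<close> \<open>c > 0\<close>, of "card K - 1"] by simp_all
  have "distributed M lborel (\<lambda>\<omega>. \<Sum>j\<in>Inr ` K. (cmod ((case j of Inl k \<Rightarrow> g k | Inr k \<Rightarrow> h k) \<omega>))\<^sup>2)
      (erlang_density (card (Inr ` K :: ('k + 'k) set) - 1) l)"
    unfolding l_def using K rd h by (intro distributed_sum_cn_norm_square indep_vars_subset[OF indep]) auto
  then have erlang: "distributed M lborel (\<lambda>\<omega>. \<Sum>k\<in>K. (cmod (h k \<omega>))\<^sup>2) (erlang_density (card K - 1) l)"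
    by (simp add: sum.reindex card_image)
  have "emeasure M {\<omega> \<in> space M. (cmod (\<Sum>k\<in>K. g k \<omega> * h k \<omega>))\<^sup>2 \<le> \<tau>}
      = (\<integral>\<^sup>+\<omega>. \<phi> (\<Sum>k\<in>K. (cmod (h k \<omega>))\<^sup>2) \<partial>M)"
    unfolding \<phi>_def using K sr \<tau> indep g by (intro emeasure_cn_bilinear_le) (auto simp: distr_eq_cn_measure)
  also have "\<dots> = (\<integral>\<^sup>+t. ennreal (erlang_density (card K - 1) l t) * \<phi> t \<partial>lborel)"
    by (rule distributed_nn_integral[OF erlang, symmetric]) (simp add: \<phi>_def)
  also have "\<dots> = (\<integral>\<^sup>+t. ennreal (erlang_density (card K - 1) l t) * ennreal (1 - exp (- c / t)) \<partial>lborel)"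
    using AE_lborel_singleton[of 0]
    by (intro nn_integral_cong_AE, eventually_elim) (simp add: \<phi>_def c_def)
  also have "\<dots> = ennreal (1 - cascade_tail (card K) (\<tau> / (\<Omega>sr * \<Omega>rd)))"
    by (rule tail(1))
  finally show ?thesis
    using tail(2) by (simp add: measure_def)
qed

section \<open>Outage probability\<close>

lemma (in prob_space) prob_Max_le_indep_vars:
  fixes X :: "'i \<Rightarrow> 'a \<Rightarrow> real"
  assumes indep: "indep_vars (\<lambda>_. borel) X I" and "finite I" "I \<noteq> {}"
  shows "prob {\<omega> \<in> space M. Max ((\<lambda>i. X i \<omega>) ` I) \<le> x} = (\<Prod>i\<in>I. prob {\<omega> \<in> space M. X i \<omega> \<le> x})"
proof -
  have "{\<omega> \<in> space M. Max ((\<lambda>i. X i \<omega>) ` I) \<le> x} = (\<Inter>i\<in>I. X i -` {..x} \<inter> space M)"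
    using assms(2,3) by auto
  then show ?thesis
    using indep_varsD_finite[OF indep assms(3,2), of "\<lambda>_. {..x}"] by (simp add: vimage_def Int_def conj_commute)
qed

lemma measure_le_eq_of_distr_eq:
  fixes X :: "'a \<Rightarrow> real" and Y :: "'b \<Rightarrow> real"
  assumes "X \<in> borel_measurable M" "Y \<in> borel_measurable N" "distr M borel X = distr N borel Y"
  shows "measure M {\<omega> \<in> space M. X \<omega> \<le> x} = measure N {\<omega> \<in> space N. Y \<omega> \<le> x}"
  using measure_distr[OF assms(1), of "{..x}"] measure_distr[OF assms(2), of "{..x}"] assms(3)
  by (simp add: vimage_def Int_def conj_commute)

theorem corollary2:
  fixes P Q :: nat
    and \<Omega>sr \<Omega>rd \<rho> R :: real
    and M :: "'a measure" and N :: "'b measure"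
    and X :: "nat \<Rightarrow> 'a \<Rightarrow> real"
    and g h :: "nat \<Rightarrow> 'b \<Rightarrow> complex"
  assumes "P \<ge> 1" and "Q \<ge> 1"
    and "\<Omega>sr > 0" and "\<Omega>rd > 0" and "\<rho> > 0" and "R > 0"
    and N_prob: "prob_space N"
    and gh_indep: "prob_space.indep_vars N (\<lambda>_. borel)
          (\<lambda>i. case i of Inl k \<Rightarrow> g k | Inr k \<Rightarrow> h k) (Inl ` {1..Q} \<union> Inr ` {1..Q})"
    and g_distr: "\<And>k. k \<in> {1..Q} \<Longrightarrow>
          distributed N lborel (g k) (\<lambda>z. ennreal (cn_density \<Omega>sr z))"
    and h_distr: "\<And>k. k \<in> {1..Q} \<Longrightarrow>
          distributed N lborel (h k) (\<lambda>z. ennreal (cn_density \<Omega>rd z))"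
    and M_prob: "prob_space M"
    and X_indep: "prob_space.indep_vars M (\<lambda>_. borel) X {1..P}"
    and X_distr: "\<And>p. p \<in> {1..P} \<Longrightarrow>
          distr M borel (X p) = distr N borel (\<lambda>\<omega>. (cmod (\<Sum>k\<in>{1..Q}. g k \<omega> * h k \<omega>))^2)"
  shows "measure M {\<omega> \<in> space M. \<rho> * Max ((\<lambda>p. X p \<omega>) ` {1..P}) \<le> 2 powr R - 1}
       = (1 - 2 / Gamma (real Q) * ((2 powr R - 1) / (\<rho> * \<Omega>sr * \<Omega>rd)) powr (real Q / 2)
            * besselK (real Q) (2 * sqrt ((2 powr R - 1) / (\<rho> * \<Omega>sr * \<Omega>rd)))) ^ P"
proof -
  interpret M: prob_space M by (rule M_prob)
  interpret N: prob_space N by (rule N_prob)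
  define x where "x = (2 powr R - 1) / \<rho>"
  have "x > 0"
    using \<open>R > 0\<close> \<open>\<rho> > 0\<close> by (simp add: x_def)
  have gain_meas: "(\<lambda>\<omega>. (cmod (\<Sum>k\<in>{1..Q}. g k \<omega> * h k \<omega>))\<^sup>2) \<in> borel_measurable N"
    using distributed_measurable[OF g_distr] distributed_measurable[OF h_distr]
    by (intro borel_measurable_cascade_gain) simp_all
  have "measure M {\<omega> \<in> space M. \<rho> * Max ((\<lambda>p. X p \<omega>) ` {1..P}) \<le> 2 powr R - 1}
      = measure M {\<omega> \<in> space M. Max ((\<lambda>p. X p \<omega>) ` {1..P}) \<le> x}"
    using \<open>\<rho> > 0\<close> by (simp add: x_def pos_le_divide_eq mult.commute)
  also have "\<dots> = (\<Prod>p\<in>{1..P}. measure M {\<omega> \<in> space M. X p \<omega> \<le> x})"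
    using \<open>P \<ge> 1\<close> by (intro M.prob_Max_le_indep_vars[OF X_indep]) simp_all
  also have "\<dots> = (\<Prod>p\<in>{1..P}. measure N {\<omega> \<in> space N. (cmod (\<Sum>k\<in>{1..Q}. g k \<omega> * h k \<omega>))\<^sup>2 \<le> x})"
    using X_indep gain_meas X_distr
    by (intro prod.cong refl measure_le_eq_of_distr_eq) (auto simp: M.indep_vars_def)
  also have "\<dots> = (1 - cascade_tail Q (x / (\<Omega>sr * \<Omega>rd))) ^ P"
    using N.prob_cascade_gain_le[OF _ _ \<open>\<Omega>sr > 0\<close> \<open>\<Omega>rd > 0\<close> \<open>x > 0\<close> gh_indep g_distr h_distr]
      \<open>Q \<ge> 1\<close> by simp
  finally show ?thesis
    using \<open>\<rho> > 0\<close> by (simp add: cascade_tail_def x_def mult.assoc)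
qed

end
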